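(* Let $k\ge 3$ be odd and $r\ge 2$ an integer. Let $G$ be the graph with vertex set $\{u,v_1,\dots,v_{k-1},s_1,\dots,s_{r-1},w_1,\dots,w_{r-1}\}$ and edge set $\{v_{i-1}v_i\mid 1\le i\le k\}\cup\{s_{i-1}s_i\mid 1\le i\le r-1\}\cup\{w_{i-1}w_i\mid 1\le i\le r-1\}$, where $v_0=v_k=s_0=w_0=u$ (i.e. a cycle $C_k$ with two paths on $r$ vertices each attached by an endpoint to the same cycle vertex $u$). Then $G$ is not odd-periodic, i.e. the Grover walk on $G$ is either not periodic or has even period.
   Context: For a simple connected finite graph $G=(V,E)$, let $\mathcal{A}=\{(u,v),(v,u)\mid uv\in E\}$ be the set of arcs; for an arc $e=(u,v)$ write $o(e)=u$, $t(e)=v$, $\bar e=(v,u)$. The Grover walk has time evolution $U$ on $\mathbb{C}^{\mathcal{A}}$ with $U_{e,f}=2/\deg t(f)$ if $t(f)=o(e)$, $e\neq\bar f$; $U_{e,f}=2/\deg t(f)-1$ if $e=\bar f$; $0$ otherwise. $G$ is periodic if $U^m=I$ for some positive integer $m$; the least such $m$ is the period; $G$ is odd-periodic if it is periodic with odd period. *)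

theory Defs
  imports Complex_Main
begin

text \<open>A simple graph is given by its edge set Es of unordered pairs (2-element sets).\<close>

definition arcs :: "'a set set \<Rightarrow> ('a \<times> 'a) set" where
  "arcs Es = {(a, b). a \<noteq> b \<and> {a, b} \<in> Es}"

definition deg :: "'a set set \<Rightarrow> 'a \<Rightarrow> nat" where
  "deg Es v = card {w. w \<noteq> v \<and> {v, w} \<in> Es}"

text \<open>Grover time evolution, entry U(e,f), with o(e) = fst e, t(e) = snd e.\<close>
definition grover :: "'a set set \<Rightarrow> ('a \<times> 'a) \<Rightarrow> ('a \<times> 'a) \<Rightarrow> real" where
  "grover Es e f =
     (if snd f = fst e \<and> e \<noteq> prod.swap f then 2 / real (deg Es (snd f))
      else if e = prod.swap f then 2 / real (deg Es (snd f)) - 1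
      else 0)"

definition mat_mult :: "'b set \<Rightarrow> ('b \<Rightarrow> 'b \<Rightarrow> real) \<Rightarrow> ('b \<Rightarrow> 'b \<Rightarrow> real) \<Rightarrow> 'b \<Rightarrow> 'b \<Rightarrow> real" where
  "mat_mult A M N e f = (\<Sum>g\<in>A. M e g * N g f)"

definition mat_id :: "'b \<Rightarrow> 'b \<Rightarrow> real" where
  "mat_id e f = (if e = f then 1 else 0)"

fun mat_pow :: "'b set \<Rightarrow> ('b \<Rightarrow> 'b \<Rightarrow> real) \<Rightarrow> nat \<Rightarrow> 'b \<Rightarrow> 'b \<Rightarrow> real" where
  "mat_pow A M 0 = mat_id"
| "mat_pow A M (Suc n) = mat_mult A M (mat_pow A M n)"

definition grover_pow_id :: "'a set set \<Rightarrow> nat \<Rightarrow> bool" where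
  "grover_pow_id Es m \<longleftrightarrow>
     (\<forall>e\<in>arcs Es. \<forall>f\<in>arcs Es. mat_pow (arcs Es) (grover Es) m e f = mat_id e f)"

definition periodic :: "'a set set \<Rightarrow> bool" where
  "periodic Es \<longleftrightarrow> (\<exists>m>0. grover_pow_id Es m)"

definition period :: "'a set set \<Rightarrow> nat" where
  "period Es = (LEAST m. m > 0 \<and> grover_pow_id Es m)"

definition odd_periodic :: "'a set set \<Rightarrow> bool" where
  "odd_periodic Es \<longleftrightarrow> periodic Es \<and> odd (period Es)"

datatype vtx = U | Vc nat | Sp nat | Wp nat

definition cyc :: "nat \<Rightarrow> nat \<Rightarrow> vtx" where
  "cyc k i = (if i = 0 \<or> i = k then U else Vc i)"

definition spath :: "nat \<Rightarrow> vtx" where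
  "spath i = (if i = 0 then U else Sp i)"

definition wpath :: "nat \<Rightarrow> vtx" where
  "wpath i = (if i = 0 then U else Wp i)"

definition cycle_two_tails_verts :: "nat \<Rightarrow> nat \<Rightarrow> vtx set" where
  "cycle_two_tails_verts k r =
     {U} \<union> Vc ` {1..k-1} \<union> Sp ` {1..r-1} \<union> Wp ` {1..r-1}"

definition cycle_two_tails :: "nat \<Rightarrow> nat \<Rightarrow> vtx set set" where
  "cycle_two_tails k r =
     {{cyc k (i - 1), cyc k i} | i. 1 \<le> i \<and> i \<le> k}
   \<union> {{spath (i - 1), spath i} | i. 1 \<le> i \<and> i \<le> r - 1}
   \<union> {{wpath (i - 1), wpath i} | i. 1 \<le> i \<and> i \<le> r - 1}"

end

theory Submission
  imports Defs
begin

(* Let L = r - 1 be the length of the two tails. Apply U^n to the vector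
   delta(u,s1) - delta(u,w1). Vertices of degree one or two pass a unit pulse on
   deterministically, so the positive and the negative pulse run in lockstep out to
   the ends of their tails and back. They arrive at u simultaneously, and since
   U(delta(x,u) - delta(y,u)) = delta(u,y) - delta(u,x) whatever the degree of u, they
   leave again with their tails exchanged. So the n-th column difference is an
   explicit pair of opposite pulses, and U^m = I forces the positive pulse to be
   back on the arc (u,s1) at time m, which happens only if 2L divides m. *)

definition nbrs :: "'a set set \<Rightarrow> 'a \<Rightarrow> 'a set" where
  "nbrs Es v = {w. w \<noteq> v \<and> {v, w} \<in> Es}"

lemma deg_eq_card_nbrs: "deg Es v = card (nbrs Es v)"
  by (simp add: deg_def nbrs_def)

lemma in_arcs_iff_nbrs: "(a, b) \<in> arcs Es \<longleftrightarrow> b \<in> nbrs Es a"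
  by (auto simp: arcs_def nbrs_def)

lemma nbrs_sym: "a \<in> nbrs Es b \<longleftrightarrow> b \<in> nbrs Es a"
  by (auto simp: nbrs_def insert_commute)

lemma finite_arcs: "finite (\<Union>Es) \<Longrightarrow> finite (arcs Es)"
  by (rule finite_subset[of _ "\<Union>Es \<times> \<Union>Es"]) (auto simp: arcs_def)

lemma grover_column:
  "grover Es e (x, v) =
     (if fst e = v then 2 / real (deg Es v) else 0) - mat_id e (v, x)"
  by (cases e) (auto simp: grover_def mat_id_def)

lemma grover_diff_same_head:
  "grover Es e (x, v) - grover Es e (y, v) = mat_id e (v, y) - mat_id e (v, x)"
  by (simp add: grover_column)

(* x = y is allowed: a leaf reflects the pulse. *)
lemma grover_transmit:
  assumes "nbrs Es v = {x, y}" and "e \<in> arcs Es"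
  shows "grover Es e (x, v) = mat_id e (v, y)"
proof -
  obtain a b where e: "e = (a, b)" by force
  have "b \<in> nbrs Es a" using assms(2) e in_arcs_iff_nbrs by metis
  then show ?thesis
    using assms(1) by (cases "x = y") (auto simp: e grover_column deg_eq_card_nbrs mat_id_def)
qed

lemma sum_mult_mat_id:
  assumes "finite A" and "a \<in> A"
  shows "(\<Sum>g\<in>A. f g * mat_id g a) = f a"
  using assms by (simp add: mat_id_def if_distrib[of "(*) _"] sum.delta' cong: if_cong)

lemma mat_pow_column_diff:
  assumes "finite A" and "\<And>n. a n \<in> A" and "\<And>n. b n \<in> A"
    and step: "\<And>n e. e \<in> A \<Longrightarrow> M e (a n) - M e (b n) = mat_id e (a (Suc n)) - mat_id e (b (Suc n))"
    and "e \<in> A"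
  shows "mat_pow A M n e (a 0) - mat_pow A M n e (b 0) = mat_id e (a n) - mat_id e (b n)"
  using \<open>e \<in> A\<close>
proof (induction n arbitrary: e)
  case 0
  then show ?case by simp
next
  case (Suc n)
  have "mat_pow A M (Suc n) e (a 0) - mat_pow A M (Suc n) e (b 0)
      = (\<Sum>g\<in>A. M e g * (mat_pow A M n g (a 0) - mat_pow A M n g (b 0)))"
    by (simp add: mat_mult_def sum_subtractf[symmetric] right_diff_distrib)
  also have "\<dots> = (\<Sum>g\<in>A. M e g * (mat_id g (a n) - mat_id g (b n)))"
    using Suc.IH by simp
  also have "\<dots> = M e (a n) - M e (b n)"
    using assms(1-3) by (simp add: right_diff_distrib sum_subtractf sum_mult_mat_id)
  also have "\<dots> = mat_id e (a (Suc n)) - mat_id e (b (Suc n))"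
    using step Suc.prems .
  finally show ?case .
qed

lemma tail_eq_U_iff: "P \<in> {spath, wpath} \<Longrightarrow> P i = U \<longleftrightarrow> i = 0"
  by (auto simp: spath_def wpath_def split: if_splits)

lemma tail_eq_iff: "P \<in> {spath, wpath} \<Longrightarrow> P i = P j \<longleftrightarrow> i = j"
  by (auto simp: spath_def wpath_def split: if_splits)

lemma tail_edge:
  assumes "P \<in> {spath, wpath}" and "1 \<le> i" and "i \<le> L"
  shows "{P (i - 1), P i} \<in> cycle_two_tails k (Suc L)"
  using assms unfolding cycle_two_tails_def diff_Suc_1 by blast

lemma tail_vertex_edge:
  assumes "P \<in> {spath, wpath}" and "1 \<le> i" and "{P i, y} \<in> cycle_two_tails k (Suc L)"
  obtains j where "1 \<le> j" and "j \<le> L" and "{P i, y} = {P (j - 1), P j}"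
proof -
  have not_cyc: "P i \<noteq> cyc k m" for m
    using assms(1,2) by (auto simp: cyc_def spath_def wpath_def)
  have not_other: "P i \<noteq> Q m" if "Q \<in> {spath, wpath}" "Q \<noteq> P" for Q m
    using assms(1,2) that by (auto simp: spath_def wpath_def split: if_splits)
  from assms(3) consider
      (cycle) m where "{P i, y} = {cyc k (m - 1), cyc k m}"
    | (tail) Q j where "Q \<in> {spath, wpath}" "1 \<le> j" "j \<le> L" "{P i, y} = {Q (j - 1), Q j}"
    unfolding cycle_two_tails_def diff_Suc_1 by blast
  then show thesis
  proof cases
    case cycle
    then show thesis using not_cyc by (metis doubleton_eq_iff)
  next
    case tail
    then have "Q = P" using not_other by (metis doubleton_eq_iff)
    with tail that show thesis by blast
  qed
qed

lemma nbrs_tail: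
  assumes "P \<in> {spath, wpath}" and "1 \<le> i" and "i \<le> L"
  shows "nbrs (cycle_two_tails k (Suc L)) (P i) = P ` ({i - 1, i + 1} \<inter> {..L})"
proof (rule set_eqI)
  fix y
  show "y \<in> nbrs (cycle_two_tails k (Suc L)) (P i) \<longleftrightarrow> y \<in> P ` ({i - 1, i + 1} \<inter> {..L})"
  proof
    assume "y \<in> nbrs (cycle_two_tails k (Suc L)) (P i)"
    then have "y \<noteq> P i" and "{P i, y} \<in> cycle_two_tails k (Suc L)" by (auto simp: nbrs_def)
    then obtain j where "1 \<le> j" "j \<le> L" "{P i, y} = {P (j - 1), P j}"
      using tail_vertex_edge assms(1,2) by blast
    then show "y \<in> P ` ({i - 1, i + 1} \<inter> {..L})"
      using \<open>y \<noteq> P i\<close> tail_eq_iff[OF assms(1)] by (auto simp: doubleton_eq_iff)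
  next
    assume "y \<in> P ` ({i - 1, i + 1} \<inter> {..L})"
    then consider "y = P (i - 1)" | "y = P (i + 1)" "i + 1 \<le> L" by auto
    then show "y \<in> nbrs (cycle_two_tails k (Suc L)) (P i)"
      using tail_edge[OF assms(1), of i L k] tail_edge[OF assms(1), of "i + 1" L k] assms
        tail_eq_iff[OF assms(1)] by cases (auto simp: nbrs_def insert_commute)
  qed
qed

definition bounce :: "nat \<Rightarrow> nat \<Rightarrow> nat" where
  "bounce L j = (if j \<le> L then j else 2 * L - j)"

lemma bounce_bounds: "0 < j \<Longrightarrow> j < 2 * L \<Longrightarrow> 1 \<le> bounce L j \<and> bounce L j \<le> L"
  by (auto simp: bounce_def)

lemma bounce_adjacent:
  assumes "0 < j" and "j < 2 * L"
  shows "{bounce L (j - 1), bounce L (j + 1)} = {bounce L j - 1, bounce L j + 1} \<inter> {..L}"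
  using assms by (cases j L rule: linorder_cases) (auto simp: bounce_def)

lemma bounce_eq_0_iff: "j < 2 * L \<Longrightarrow> bounce L j = 0 \<longleftrightarrow> j = 0"
  by (simp add: bounce_def)

definition pass :: "nat \<Rightarrow> (nat \<Rightarrow> vtx) \<Rightarrow> nat \<Rightarrow> vtx \<times> vtx" where
  "pass L P j = (P (bounce L j), P (bounce L (Suc j)))"

lemma pass_first: "0 < L \<Longrightarrow> pass L P 0 = (P 0, P 1)"
  and pass_last: "0 < L \<Longrightarrow> pass L P (2 * L - 1) = (P 1, P 0)"
  by (cases "L = 1"; auto simp: pass_def bounce_def)+

lemma nbrs_bounce:
  assumes "P \<in> {spath, wpath}" and "0 < j" and "j < 2 * L"
  shows "nbrs (cycle_two_tails k (Suc L)) (P (bounce L j)) = {P (bounce L (j - 1)), P (bounce L (j + 1))}"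
  using nbrs_tail[OF assms(1)] bounce_bounds[OF assms(2,3)] bounce_adjacent[OF assms(2,3)]
  by (metis image_insert image_empty)

lemma pass_in_arcs:
  assumes "P \<in> {spath, wpath}" and "0 < L" and "j < 2 * L"
  shows "pass L P j \<in> arcs (cycle_two_tails k (Suc L))"
proof (cases "j = 0")
  case True
  have "P 0 \<in> nbrs (cycle_two_tails k (Suc L)) (P 1)"
    using nbrs_tail[OF assms(1), of 1 L k] assms(2) by simp
  then have "P 1 \<in> nbrs (cycle_two_tails k (Suc L)) (P 0)"
    using nbrs_sym by fast
  then show ?thesis
    using True assms(2) by (simp add: pass_first in_arcs_iff_nbrs)
next
  case False
  then show ?thesis
    using nbrs_bounce[OF assms(1) _ assms(3), of k] by (simp add: pass_def in_arcs_iff_nbrs)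
qed

lemma grover_pass:
  assumes "P \<in> {spath, wpath}" and "Suc j < 2 * L" and "e \<in> arcs (cycle_two_tails k (Suc L))"
  shows "grover (cycle_two_tails k (Suc L)) e (pass L P j) = mat_id e (pass L P (Suc j))"
  using grover_transmit[OF nbrs_bounce[OF assms(1) _ assms(2)] assms(3)] by (simp add: pass_def)

(* The arc carrying the positive pulse at time n: out and back along the s-tail,
   then along the w-tail, with period 4L. The negative pulse is at tour L (n + 2 * L). *)
definition tour :: "nat \<Rightarrow> nat \<Rightarrow> vtx \<times> vtx" where
  "tour L n = pass L (if even (n div (2 * L)) then spath else wpath) (n mod (2 * L))"

lemma tour_add_lap:
  assumes "0 < L"
  shows "tour L (n + 2 * L) = pass L (if even (n div (2 * L)) then wpath else spath) (n mod (2 * L))"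
proof -
  have "(n + 2 * L) div (2 * L) = Suc (n div (2 * L))" and "(n + 2 * L) mod (2 * L) = n mod (2 * L)"
    using assms by simp_all
  then show ?thesis unfolding tour_def by simp
qed

lemma tour_step:
  assumes "0 < L" and "e \<in> arcs (cycle_two_tails k (Suc L))"
  shows "grover (cycle_two_tails k (Suc L)) e (tour L n)
      - grover (cycle_two_tails k (Suc L)) e (tour L (n + 2 * L))
    = mat_id e (tour L (Suc n)) - mat_id e (tour L (Suc n + 2 * L))"
proof -
  define j where "j = n mod (2 * L)"
  define P where "P = (if even (n div (2 * L)) then spath else wpath)"
  define Q where "Q = (if even (n div (2 * L)) then wpath else spath)"
  have PQ: "P \<in> {spath, wpath}" "Q \<in> {spath, wpath}" by (simp_all add: P_def Q_def)
  have j: "j < 2 * L" using assms(1) by (simp add: j_def)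
  have now: "tour L n = pass L P j" "tour L (n + 2 * L) = pass L Q j"
    unfolding tour_add_lap[OF assms(1)] by (simp_all add: tour_def P_def Q_def j_def)
  consider "Suc j < 2 * L" | "Suc j = 2 * L" using j by linarith
  then show ?thesis
  proof cases
    case 1
    then have "Suc n mod (2 * L) = Suc j" "Suc n div (2 * L) = n div (2 * L)"
      by (simp_all add: j_def mod_Suc div_Suc)
    then have "tour L (Suc n) = pass L P (Suc j)" and "tour L (Suc n + 2 * L) = pass L Q (Suc j)"
      unfolding tour_add_lap[OF assms(1)] by (simp_all add: tour_def P_def Q_def)
    then show ?thesis
      using now grover_pass[OF PQ(1) 1 assms(2)] grover_pass[OF PQ(2) 1 assms(2)] by simp
  next
    case 2
    then have "Suc n mod (2 * L) = 0" "Suc n div (2 * L) = Suc (n div (2 * L))"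
      by (simp_all add: j_def mod_Suc div_Suc)
    then have "tour L (Suc n) = pass L Q 0" and "tour L (Suc n + 2 * L) = pass L P 0"
      unfolding tour_add_lap[OF assms(1)] by (simp_all add: tour_def P_def Q_def)
    moreover have "j = 2 * L - 1" using 2 by simp
    then have "tour L n = (P 1, P 0)" and "tour L (n + 2 * L) = (Q 1, Q 0)"
      using now pass_last[OF assms(1)] by simp_all
    moreover have "P 0 = U" and "Q 0 = U" using PQ by (simp_all add: tail_eq_U_iff)
    ultimately show ?thesis
      using pass_first[OF assms(1)] by (simp add: grover_diff_same_head)
  qed
qed

lemma tour_in_arcs: "0 < L \<Longrightarrow> tour L n \<in> arcs (cycle_two_tails k (Suc L))"
  by (simp add: tour_def pass_in_arcs)

lemma tour_0: "0 < L \<Longrightarrow> tour L 0 = (U, Sp 1)"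
  and tour_lap: "0 < L \<Longrightarrow> tour L (2 * L) = (U, Wp 1)"
  by (simp_all add: tour_def pass_first spath_def wpath_def)

lemma fst_tour_eq_U_iff: "0 < L \<Longrightarrow> fst (tour L n) = U \<longleftrightarrow> 2 * L dvd n"
  by (simp add: tour_def pass_def tail_eq_U_iff bounce_eq_0_iff dvd_eq_mod_eq_0)

lemma cycle_two_tails_pow_id_dvd:
  assumes "0 < L" and "grover_pow_id (cycle_two_tails k (Suc L)) m"
  shows "2 * L dvd m"
proof -
  define G where "G = cycle_two_tails k (Suc L)"
  have fin: "finite (arcs G)"
    unfolding G_def cycle_two_tails_def by (intro finite_arcs) auto
  have col: "mat_pow (arcs G) (grover G) m e (tour L 0) - mat_pow (arcs G) (grover G) m e (tour L (0 + 2 * L))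
      = mat_id e (tour L m) - mat_id e (tour L (m + 2 * L))" if "e \<in> arcs G" for e
    using mat_pow_column_diff[OF fin, of "tour L" "\<lambda>n. tour L (n + 2 * L)" "grover G" e m]
      tour_in_arcs tour_step assms(1) that by (simp add: G_def)
  have "mat_pow (arcs G) (grover G) m (tour L 0) (tour L 0) = 1"
    and "mat_pow (arcs G) (grover G) m (tour L 0) (tour L (2 * L)) = 0"
    using assms(2) tour_in_arcs[OF assms(1), of 0 k] tour_in_arcs[OF assms(1), of "2 * L" k]
      tour_0[OF assms(1)] tour_lap[OF assms(1)]
    unfolding grover_pow_id_def G_def by (simp_all add: mat_id_def)
  then have "mat_id (tour L 0) (tour L m) - mat_id (tour L 0) (tour L (m + 2 * L)) = 1"
    using col[of "tour L 0"] tour_in_arcs[OF assms(1)] by (simp add: G_def)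
  then have "tour L m = tour L 0"
    by (auto simp: mat_id_def split: if_splits)
  then show ?thesis
    using fst_tour_eq_U_iff[OF assms(1), of m] tour_0[OF assms(1)] by simp
qed

theorem theorem3p1:
  fixes k r :: nat
  assumes "odd k" and "k \<ge> 3" and "r \<ge> 2"
  shows "\<not> odd_periodic (cycle_two_tails k r)"
proof
  assume "odd_periodic (cycle_two_tails k r)"
  then have odd: "odd (period (cycle_two_tails k r))"
    and "\<exists>m. m > 0 \<and> grover_pow_id (cycle_two_tails k r) m"
    by (auto simp: odd_periodic_def periodic_def)
  then have pow_id: "grover_pow_id (cycle_two_tails k r) (period (cycle_two_tails k r))"
    unfolding period_def by (metis (mono_tags, lifting) LeastI_ex)
  obtain L where "r = Suc L" and "0 < L"
    using assms(3) by (cases r) auto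
  then have "2 * L dvd period (cycle_two_tails k r)"
    using pow_id cycle_two_tails_pow_id_dvd by blast
  with odd show False
    using dvd_mult_left by blast
qed

end
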